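(* Let $\lambda>0$ and let $\xi_1,\xi_2,\ldots$ be i.i.d. exponential random variables with parameter $\lambda$. For $n\ge 2$ set $\theta^\star_n=\lambda^{-1}\log n$ and, for $k=1,\ldots,n$, $$D_{n,k}(\theta^\star_n)=\sum_{\ell=1,\ \ell\ne k}^n\mathbf{1}[\xi_k+\xi_\ell>\theta^\star_n].$$ Then for each $d=0,1,2,\ldots$, the sequence of random variables $\left\{\frac1n\sum_{k=1}^n\mathbf{1}[D_{n,k}(\theta^\star_n)=d],\ n=2,3,\ldots\right\}$ does not converge in probability to any constant.
   Context: $D_{n,k}(\theta)$ is the degree of node $k$ in the random threshold graph on nodes $\{1,\ldots,n\}$ in which distinct nodes $k,\ell$ are adjacent iff $\xi_k+\xi_\ell>\theta$, where $\xi_k$ is the fitness of node $k$. An exponential random variable with parameter $\lambda$ has $\mathbb{P}[\xi\le x]=1-e^{-\lambda\max(x,0)}$. *)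

theory Defs
  imports "HOL-Probability.Probability"
begin

definition threshold_degree :: "(nat \<Rightarrow> real) \<Rightarrow> real \<Rightarrow> nat \<Rightarrow> nat \<Rightarrow> nat" where
  "threshold_degree xi theta n k = card {l \<in> {1..n}. l \<noteq> k \<and> xi k + xi l > theta}"

definition conv_in_prob_const :: "'a measure \<Rightarrow> (nat \<Rightarrow> 'a \<Rightarrow> real) \<Rightarrow> real \<Rightarrow> bool" where
  "conv_in_prob_const M X c \<longleftrightarrow>
     (\<forall>e>0. (\<lambda>n. measure M {\<omega> \<in> space M. \<bar>X n \<omega> - c\<bar> > e}) \<longlonglongrightarrow> 0)"

end

theory Submission
  imports Defs
begin

text \<open>At the critical threshold \<open>\<theta> = ln n / \<lambda>\<close> each fitness exceeds \<open>\<theta>\<close> with probability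
exactly \<open>1/n\<close>, so the number of fitnesses above \<open>\<theta>\<close> is asymptotically Poisson(1).
With probability bounded away from 0 exactly \<open>d + 2\<close> fitnesses exceed \<open>\<theta>\<close>; then every node
is adjacent to at least \<open>d + 1\<close> of them, the fraction of nodes of degree \<open>d\<close> vanishes, and so
the only possible limit in probability is 0.
On the other hand, a node with fitness in \<open>(0, 1/\<lambda>]\<close> has degree exactly \<open>d\<close> as soon as exactly
\<open>d\<close> of the other fitnesses exceed \<open>\<theta>\<close> and all the rest lie below \<open>\<theta> - 1/\<lambda>\<close>;
this again has probability bounded away from 0, so the expected fraction stays away from 0,
which is impossible for \<open>[0,1]\<close>-valued variables converging in probability to 0.\<close>

lemma (in prob_space) prob_indep_vars_all_in:
  assumes indep: "indep_vars (\<lambda>_. borel) X I" and J: "finite J" "J \<subseteq> I"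
    and A: "\<And>i. i \<in> J \<Longrightarrow> A i \<in> sets borel"
  shows "prob {\<omega> \<in> space M. \<forall>i\<in>J. X i \<omega> \<in> A i} = (\<Prod>i\<in>J. prob {\<omega> \<in> space M. X i \<omega> \<in> A i})"
proof (cases "J = {}")
  case True
  then show ?thesis by (simp add: prob_space)
next
  case False
  have "{\<omega> \<in> space M. \<forall>i\<in>J. X i \<omega> \<in> A i} = (\<Inter>i\<in>J. X i -` A i \<inter> space M)"
    using False by auto
  moreover have "{\<omega> \<in> space M. X i \<omega> \<in> A i} = X i -` A i \<inter> space M" for i
    by auto
  ultimately show ?thesis
    using indep_varsD[OF indep False J A] by simp
qed

lemma (in prob_space) prob_binomial_pattern:
  assumes indep: "indep_vars (\<lambda>_. borel) X I"
    and KL: "finite K" "finite L" "K \<subseteq> I" "L \<subseteq> I" "K \<inter> L = {}"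
    and sets: "\<And>i. i \<in> K \<Longrightarrow> G i \<in> sets borel" "E \<in> sets borel" "F \<in> sets borel"
    and EF: "E \<inter> F = {}"
    and p: "\<And>l. l \<in> L \<Longrightarrow> prob {\<omega> \<in> space M. X l \<omega> \<in> E} = p"
    and q: "\<And>l. l \<in> L \<Longrightarrow> prob {\<omega> \<in> space M. X l \<omega> \<in> F} = q"
  shows "prob {\<omega> \<in> space M. (\<forall>i\<in>K. X i \<omega> \<in> G i) \<and>
             (\<exists>S\<subseteq>L. card S = m \<and> (\<forall>l\<in>L. X l \<omega> \<in> (if l \<in> S then E else F)))}
         = (\<Prod>i\<in>K. prob {\<omega> \<in> space M. X i \<omega> \<in> G i}) * (real (card L choose m) * p ^ m * q ^ (card L - m))"
proof -
  define SS where "SS = {S. S \<subseteq> L \<and> card S = m}"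
  define A where "A S i = (if i \<in> K then G i else if i \<in> S then E else F)" for S i
  define pattern where "pattern S = {\<omega> \<in> space M. \<forall>i\<in>K \<union> L. X i \<omega> \<in> A S i}" for S
  have meas: "X i \<in> borel_measurable M" if "i \<in> I" for i
    using indep that by (auto simp: indep_vars_def)
  have event_eq: "{\<omega> \<in> space M. (\<forall>i\<in>K. X i \<omega> \<in> G i) \<and>
      (\<exists>S\<subseteq>L. card S = m \<and> (\<forall>l\<in>L. X l \<omega> \<in> (if l \<in> S then E else F)))} = (\<Union>S\<in>SS. pattern S)"
    using KL(5) by (auto simp: SS_def pattern_def A_def)
  have pattern_sets: "pattern S \<in> events" for S
    unfolding pattern_def using KL sets meas
    by (intro sets.sets_Collect_finite_All measurable_sets[where A=borel]) (auto simp: A_def)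
  have "disjoint_family_on pattern SS"
    unfolding disjoint_family_on_def
  proof (intro ballI impI)
    fix S S' assume S: "S \<in> SS" "S' \<in> SS" "S \<noteq> S'"
    then obtain l where "l \<in> L" "l \<in> S \<longleftrightarrow> l \<notin> S'"
      unfolding SS_def by blast
    then show "pattern S \<inter> pattern S' = {}"
      using KL(5) EF by (auto simp: pattern_def A_def)
  qed
  moreover have "prob (pattern S) = (\<Prod>i\<in>K. prob {\<omega> \<in> space M. X i \<omega> \<in> G i}) * (p ^ m * q ^ (card L - m))"
    if S: "S \<in> SS" for S
  proof -
    have "prob (pattern S) = (\<Prod>i\<in>K \<union> L. prob {\<omega> \<in> space M. X i \<omega> \<in> A S i})"
      unfolding pattern_def using KL sets by (intro prob_indep_vars_all_in[OF indep]) (auto simp: A_def)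
    also have "\<dots> = (\<Prod>i\<in>K. prob {\<omega> \<in> space M. X i \<omega> \<in> A S i}) * (\<Prod>i\<in>L. prob {\<omega> \<in> space M. X i \<omega> \<in> A S i})"
      using KL by (simp add: prod.union_disjoint)
    also have "\<dots> = (\<Prod>i\<in>K. prob {\<omega> \<in> space M. X i \<omega> \<in> G i}) * (\<Prod>i\<in>L. if i \<in> S then p else q)"
      using KL(5) p q by (intro arg_cong2[where f="(*)"] prod.cong) (auto simp: A_def)
    also have "(\<Prod>i\<in>L. if i \<in> S then p else q) = p ^ card S * q ^ card (L - S)"
      using S KL(2) by (simp add: prod.If_cases SS_def Int_absorb1 Diff_eq)
    finally show ?thesis
      using S KL(2) by (auto simp: SS_def card_Diff_subset finite_subset)
  qed
  moreover have "finite SS"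
    using KL(2) by (simp add: SS_def)
  ultimately have "prob (\<Union>S\<in>SS. pattern S) = (\<Sum>S\<in>SS. (\<Prod>i\<in>K. prob {\<omega> \<in> space M. X i \<omega> \<in> G i}) * (p ^ m * q ^ (card L - m)))"
    using pattern_sets by (subst finite_measure_finite_Union) auto
  then show ?thesis
    using KL(2) by (simp add: event_eq SS_def n_subsets)
qed

lemma card_Diff_singleton_le_threshold_degree:
  assumes "0 \<le> xi k" "S \<subseteq> {1..n}" "\<forall>l\<in>S. \<theta> < xi l"
  shows "card (S - {k}) \<le> threshold_degree xi \<theta> n k"
  unfolding threshold_degree_def using assms by (intro card_mono) auto

lemma threshold_degree_eq_card:
  assumes "0 \<le> xi k" "xi k \<le> a" "S \<subseteq> {1..n} - {k}"
    and "\<forall>l\<in>S. \<theta> < xi l" "\<forall>l\<in>{1..n} - {k} - S. xi l \<le> \<theta> - a"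
  shows "threshold_degree xi \<theta> n k = card S"
proof -
  have "{l \<in> {1..n}. l \<noteq> k \<and> \<theta> < xi k + xi l} = S"
    using assms by force
  then show ?thesis
    by (simp add: threshold_degree_def)
qed

definition degree_fraction :: "(nat \<Rightarrow> real) \<Rightarrow> real \<Rightarrow> nat \<Rightarrow> nat \<Rightarrow> real" where
  "degree_fraction xi \<theta> n d = (1 / real n) * real (card {k \<in> {1..n}. threshold_degree xi \<theta> n k = d})"

lemma degree_fraction_nonneg: "0 \<le> degree_fraction xi \<theta> n d"
  by (simp add: degree_fraction_def)

lemma degree_fraction_le_one: "degree_fraction xi \<theta> n d \<le> 1"
proof -
  have "card {k \<in> {1..n}. threshold_degree xi \<theta> n k = d} \<le> card {1..n}"
    by (intro card_mono) auto
  then have "card {k \<in> {1..n}. threshold_degree xi \<theta> n k = d} \<le> n"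
    by simp
  then show ?thesis
    by (cases "n = 0") (auto simp: degree_fraction_def field_simps)
qed

lemma degree_fraction_eq_sum_indicator:
  "degree_fraction xi \<theta> n d = (1 / real n) * (\<Sum>k\<in>{1..n}. if threshold_degree xi \<theta> n k = d then 1 else 0)"
  by (simp add: degree_fraction_def sum.inter_filter[symmetric])

lemma degree_fraction_eq_zero_if_many_above:
  assumes "\<forall>l\<in>{1..n}. 0 \<le> xi l" "S \<subseteq> {1..n}" "card S = d + 2" "\<forall>l\<in>S. \<theta> < xi l"
  shows "degree_fraction xi \<theta> n d = 0"
proof -
  have "d < threshold_degree xi \<theta> n k" if "k \<in> {1..n}" for k
  proof -
    have "finite S"
      using assms(2) finite_subset by blast
    then have "d < card (S - {k})"
      using assms(3) by (simp add: card_Diff_singleton_if)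
    also have "\<dots> \<le> threshold_degree xi \<theta> n k"
      using assms that by (intro card_Diff_singleton_le_threshold_degree) auto
    finally show ?thesis .
  qed
  then have "{k \<in> {1..n}. threshold_degree xi \<theta> n k = d} = {}"
    by fastforce
  then show ?thesis
    by (simp add: degree_fraction_def)
qed

lemma threshold_degree_event_measurable:
  assumes meas: "\<And>i. i \<in> {1..n} \<Longrightarrow> xi i \<in> borel_measurable M" and k: "k \<in> {1..n}"
  shows "{\<omega> \<in> space M. threshold_degree (\<lambda>i. xi i \<omega>) \<theta> n k = d} \<in> sets M"
proof -
  define adjacent where "adjacent l = {\<omega> \<in> space M. l \<noteq> k \<and> \<theta> < xi k \<omega> + xi l \<omega>}" for l
  have "adjacent l \<in> sets M" if "l \<in> {1..n}" for l
  proof -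
    have [measurable]: "xi k \<in> borel_measurable M" "xi l \<in> borel_measurable M"
      using meas k that by auto
    show ?thesis
      unfolding adjacent_def by measurable
  qed
  then have "(\<lambda>\<omega>. \<Sum>l\<in>{1..n}. indicator (adjacent l) \<omega> :: real) \<in> borel_measurable M"
    by (intro borel_measurable_sum borel_measurable_indicator)
  moreover have "(\<Sum>l\<in>{1..n}. indicator (adjacent l) \<omega>) = real (threshold_degree (\<lambda>i. xi i \<omega>) \<theta> n k)"
    if "\<omega> \<in> space M" for \<omega>
  proof -
    have "(\<Sum>l\<in>{1..n}. indicator (adjacent l) \<omega>)
        = (\<Sum>l\<in>{1..n}. if l \<noteq> k \<and> \<theta> < xi k \<omega> + xi l \<omega> then 1 else 0 :: real)"
      using that by (intro sum.cong) (auto simp: adjacent_def)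
    then show ?thesis
      by (simp add: threshold_degree_def sum.inter_filter[symmetric])
  qed
  ultimately have "(\<lambda>\<omega>. real (threshold_degree (\<lambda>i. xi i \<omega>) \<theta> n k)) \<in> borel_measurable M"
    by (subst measurable_cong) auto
  from measurable_sets[OF this, of "{real d}"] show ?thesis
    by (simp add: vimage_def Int_def conj_commute)
qed

lemma binomial_prob_eventually_ge:
  fixes c :: real
  assumes "0 \<le> c"
  shows "\<exists>\<delta>>0. \<forall>\<^sub>F n in sequentially.
           \<delta> \<le> real ((n - j) choose m) * (1 / real n) ^ m * (1 - c / real n) ^ (n - j - m)"
proof (intro exI conjI)
  show "0 < (1 / (2 * real m)) ^ m * (exp (- c) / 2)"
    by (cases "m = 0") auto
  have "(\<lambda>n. (1 + (- c) / real n) ^ n) \<longlonglongrightarrow> exp (- c)"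
    by (rule tendsto_exp_limit_sequentially)
  then have "\<forall>\<^sub>F n in sequentially. exp (- c) / 2 < (1 + (- c) / real n) ^ n"
    by (rule order_tendstoD) simp
  moreover have "\<forall>\<^sub>F n in sequentially. 2 * (j + m) + 1 \<le> n \<and> c \<le> real n"
  proof -
    obtain N :: nat where "c \<le> real N"
      using real_arch_simple by blast
    show ?thesis
      by (rule eventually_mono[OF eventually_ge_at_top[of "max (2 * (j + m) + 1) N"]])
        (use \<open>c \<le> real N\<close> in auto)
  qed
  text \<open>\<open>(n - j choose m) / n ^ m \<ge> (1 / 2m) ^ m\<close> for large \<open>n\<close>, while \<open>(1 - c/n) ^ n \<longrightarrow> exp (- c)\<close>.\<close>
  ultimately show "\<forall>\<^sub>F n in sequentially. (1 / (2 * real m)) ^ m * (exp (- c) / 2)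
      \<le> real ((n - j) choose m) * (1 / real n) ^ m * (1 - c / real n) ^ (n - j - m)"
  proof eventually_elim
    case (elim n)
    have "1 / (2 * real m) \<le> real (n - j) / real m * (1 / real n)"
    proof (cases "m = 0")
      case False
      then show ?thesis
        using elim by (simp add: field_simps of_nat_diff)
    qed simp
    then have "(1 / (2 * real m)) ^ m \<le> (real (n - j) / real m * (1 / real n)) ^ m"
      by (intro power_mono) auto
    also have "\<dots> = (real (n - j) / real m) ^ m * (1 / real n) ^ m"
      by (rule power_mult_distrib)
    also have "\<dots> \<le> real ((n - j) choose m) * (1 / real n) ^ m"
      using elim by (intro mult_right_mono binomial_ge_n_over_k_pow_k) auto
    finally have binomial: "(1 / (2 * real m)) ^ m \<le> real ((n - j) choose m) * (1 / real n) ^ m" .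
    have "exp (- c) / 2 \<le> (1 - c / real n) ^ n"
      using elim by simp
    also have "\<dots> \<le> (1 - c / real n) ^ (n - j - m)"
      using elim assms by (intro power_decreasing) (auto simp: field_simps)
    finally have survival: "exp (- c) / 2 \<le> (1 - c / real n) ^ (n - j - m)" .
    show ?case
      using binomial survival by (intro mult_mono) auto
  qed
qed

lemma (in prob_space) conv_in_prob_const_eq_zero:
  assumes conv: "conv_in_prob_const M X c" and meas: "\<And>n. X n \<in> borel_measurable M"
    and "0 < \<delta>" and zero: "\<forall>\<^sub>F n in sequentially. \<delta> \<le> prob {\<omega> \<in> space M. X n \<omega> = 0}"
  shows "c = 0"
proof (rule ccontr)
  assume "c \<noteq> 0"
  then have "0 < \<bar>c\<bar> / 2"
    by simp
  then have "(\<lambda>n. prob {\<omega> \<in> space M. \<bar>c\<bar> / 2 < \<bar>X n \<omega> - c\<bar>}) \<longlonglongrightarrow> 0"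
    using conv unfolding conv_in_prob_const_def by blast
  then have "\<forall>\<^sub>F n in sequentially. prob {\<omega> \<in> space M. \<bar>c\<bar> / 2 < \<bar>X n \<omega> - c\<bar>} < \<delta>"
    by (rule order_tendstoD) (rule \<open>0 < \<delta>\<close>)
  with zero have "\<forall>\<^sub>F n in sequentially. False"
  proof eventually_elim
    case (elim n)
    have [measurable]: "X n \<in> borel_measurable M"
      by (rule meas)
    have "{\<omega> \<in> space M. X n \<omega> = 0} \<subseteq> {\<omega> \<in> space M. \<bar>c\<bar> / 2 < \<bar>X n \<omega> - c\<bar>}"
      using \<open>c \<noteq> 0\<close> by auto
    then have "prob {\<omega> \<in> space M. X n \<omega> = 0} \<le> prob {\<omega> \<in> space M. \<bar>c\<bar> / 2 < \<bar>X n \<omega> - c\<bar>}"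
      by (intro finite_measure_mono) measurable
    then show False
      using elim by linarith
  qed
  then show False
    by simp
qed

lemma (in prob_space) expectation_tendsto_zero_if_conv_in_prob_zero:
  assumes conv: "conv_in_prob_const M X 0" and meas: "\<And>n. X n \<in> borel_measurable M"
    and nonneg: "\<And>n \<omega>. \<omega> \<in> space M \<Longrightarrow> 0 \<le> X n \<omega>" and le_one: "\<And>n \<omega>. \<omega> \<in> space M \<Longrightarrow> X n \<omega> \<le> 1"
  shows "(\<lambda>n. expectation (X n)) \<longlonglongrightarrow> 0"
proof (rule order_tendstoI)
  fix a :: real
  assume "a < 0"
  show "\<forall>\<^sub>F n in sequentially. a < expectation (X n)"
  proof (rule always_eventually, rule allI)
    fix n
    show "a < expectation (X n)"
      using \<open>a < 0\<close> Bochner_Integration.integral_nonneg[where f="X n"] nonneg by fastforce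
  qed
next
  fix a :: real
  assume "0 < a"
  define T where "T n = {\<omega> \<in> space M. a / 2 < \<bar>X n \<omega>\<bar>}" for n
  have "0 < a / 2"
    using \<open>0 < a\<close> by simp
  then have "(\<lambda>n. prob {\<omega> \<in> space M. a / 2 < \<bar>X n \<omega> - 0\<bar>}) \<longlonglongrightarrow> 0"
    using conv unfolding conv_in_prob_const_def by blast
  then have "(\<lambda>n. prob (T n)) \<longlonglongrightarrow> 0"
    by (simp add: T_def)
  then have "\<forall>\<^sub>F n in sequentially. prob (T n) < a / 2"
    by (rule order_tendstoD) (simp add: \<open>0 < a\<close>)
  then show "\<forall>\<^sub>F n in sequentially. expectation (X n) < a"
  proof eventually_elim
    case (elim n)
    have [measurable]: "X n \<in> borel_measurable M"
      by (rule meas)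
    have T: "T n \<in> events"
      unfolding T_def by measurable
    have "expectation (X n) \<le> expectation (\<lambda>\<omega>. a / 2 + indicator (T n) \<omega>)"
    proof (rule integral_mono)
      show "integrable M (X n)"
        using nonneg le_one by (intro integrable_const_bound[where B=1]) auto
      show "integrable M (\<lambda>\<omega>. a / 2 + indicator (T n) \<omega>)"
        using T by (intro Bochner_Integration.integrable_add integrable_real_indicator) (auto simp: emeasure_eq_measure)
      show "X n \<omega> \<le> a / 2 + indicator (T n) \<omega>" if "\<omega> \<in> space M" for \<omega>
        using that nonneg[of \<omega> n] le_one[of \<omega> n] \<open>0 < a\<close> by (auto simp: T_def indicator_def)
    qed
    also have "\<dots> = a / 2 + prob (T n)"
      using T by (subst Bochner_Integration.integral_add) (auto simp: prob_space Int_absorb2 sets.sets_into_space emeasure_eq_measure)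
    finally show ?case
      using elim by linarith
  qed
qed

locale exponential_fitnesses = prob_space +
  fixes xi :: "nat \<Rightarrow> 'a \<Rightarrow> real" and lam :: real
  assumes lam_pos: "0 < lam"
    and indep: "indep_vars (\<lambda>_. borel) xi {1..}"
    and exponential: "\<And>i. 1 \<le> i \<Longrightarrow> distributed M lborel (xi i) (exponential_density lam)"
begin

lemma fitness_measurable: "1 \<le> i \<Longrightarrow> xi i \<in> borel_measurable M"
  using distributed_measurable[OF exponential] by simp

lemma prob_fitness_gt:
  assumes "1 \<le> i" "0 \<le> a"
  shows "prob {\<omega> \<in> space M. a < xi i \<omega>} = exp (- a * lam)"
  using exponential_distributedD_gt[OF exponential assms(2) lam_pos, OF assms(1)] by simp

lemma prob_fitness_in_Ioc:
  assumes "1 \<le> i" "0 \<le> b"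
  shows "prob {\<omega> \<in> space M. 0 < xi i \<omega> \<and> xi i \<omega> \<le> b} = 1 - exp (- b * lam)"
proof -
  have [measurable]: "xi i \<in> borel_measurable M"
    using assms(1) by (rule fitness_measurable)
  have "prob {\<omega> \<in> space M. 0 < xi i \<omega> \<and> xi i \<omega> \<le> b}
      = prob {\<omega> \<in> space M. xi i \<omega> \<le> b} - prob {\<omega> \<in> space M. xi i \<omega> \<le> 0}"
  proof -
    have "{\<omega> \<in> space M. 0 < xi i \<omega> \<and> xi i \<omega> \<le> b} = {\<omega> \<in> space M. xi i \<omega> \<le> b} - {\<omega> \<in> space M. xi i \<omega> \<le> 0}"
      by auto
    moreover have "{\<omega> \<in> space M. xi i \<omega> \<le> 0} \<subseteq> {\<omega> \<in> space M. xi i \<omega> \<le> b}"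
      using assms(2) by auto
    ultimately show ?thesis
      by (simp add: finite_measure_Diff)
  qed
  then show ?thesis
    using exponential_distributedD_le[OF exponential _ lam_pos, OF assms(1)] assms(2) by simp
qed

lemma degree_fraction_eq_sum_indicator_events:
  assumes "\<omega> \<in> space M"
  shows "degree_fraction (\<lambda>i. xi i \<omega>) \<theta> n d
    = (1 / real n) * (\<Sum>k\<in>{1..n}. indicator {\<omega> \<in> space M. threshold_degree (\<lambda>i. xi i \<omega>) \<theta> n k = d} \<omega>)"
  unfolding degree_fraction_eq_sum_indicator using assms by (intro arg_cong2[where f="(*)"] sum.cong) auto

lemma threshold_degree_event_in_events:
  "k \<in> {1..n} \<Longrightarrow> {\<omega> \<in> space M. threshold_degree (\<lambda>i. xi i \<omega>) \<theta> n k = d} \<in> events"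
  using fitness_measurable by (intro threshold_degree_event_measurable) auto

lemma degree_fraction_measurable:
  "(\<lambda>\<omega>. degree_fraction (\<lambda>i. xi i \<omega>) \<theta> n d) \<in> borel_measurable M"
proof -
  have "(\<lambda>\<omega>. (1 / real n) * (\<Sum>k\<in>{1..n}. indicator {\<omega> \<in> space M. threshold_degree (\<lambda>i. xi i \<omega>) \<theta> n k = d} \<omega>))
      \<in> borel_measurable M"
    using threshold_degree_event_in_events
    by (intro borel_measurable_times borel_measurable_const borel_measurable_sum borel_measurable_indicator) auto
  then show ?thesis
    by (subst measurable_cong[OF degree_fraction_eq_sum_indicator_events])
qed

lemma expectation_degree_fraction:
  "expectation (\<lambda>\<omega>. degree_fraction (\<lambda>i. xi i \<omega>) \<theta> n d)
    = (1 / real n) * (\<Sum>k\<in>{1..n}. prob {\<omega> \<in> space M. threshold_degree (\<lambda>i. xi i \<omega>) \<theta> n k = d})"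
proof -
  have "expectation (\<lambda>\<omega>. degree_fraction (\<lambda>i. xi i \<omega>) \<theta> n d)
      = expectation (\<lambda>\<omega>. (1 / real n) * (\<Sum>k\<in>{1..n}. indicator {\<omega> \<in> space M. threshold_degree (\<lambda>i. xi i \<omega>) \<theta> n k = d} \<omega>))"
    by (intro Bochner_Integration.integral_cong degree_fraction_eq_sum_indicator_events) auto
  also have "\<dots> = (1 / real n) * (\<Sum>k\<in>{1..n}. prob {\<omega> \<in> space M. threshold_degree (\<lambda>i. xi i \<omega>) \<theta> n k = d})"
    using threshold_degree_event_in_events
    by (subst Bochner_Integration.integral_mult_right_zero, subst Bochner_Integration.integral_sum) (auto simp: emeasure_eq_measure Int_absorb2 sets.sets_into_space)
  finally show ?thesis .
qed

lemma prob_degree_fraction_zero_ge: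
  assumes "1 \<le> n"
  shows "real (n choose (d + 2)) * (1 / real n) ^ (d + 2) * (1 - 1 / real n) ^ (n - (d + 2))
    \<le> prob {\<omega> \<in> space M. degree_fraction (\<lambda>i. xi i \<omega>) (ln (real n) / lam) n d = 0}"
proof -
  define \<theta> where "\<theta> = ln (real n) / lam"
  have \<theta>: "0 \<le> \<theta>" "exp (- \<theta> * lam) = 1 / real n"
    using assms lam_pos by (auto simp: \<theta>_def exp_minus inverse_eq_divide)
  define E where "E = {\<omega> \<in> space M. \<exists>S\<subseteq>{1..n}. card S = d + 2 \<and>
    (\<forall>l\<in>{1..n}. xi l \<omega> \<in> (if l \<in> S then {\<theta><..} else {0<..\<theta>}))}"
  have "prob {\<omega> \<in> space M. (\<forall>i\<in>{}. xi i \<omega> \<in> UNIV) \<and> (\<exists>S\<subseteq>{1..n}. card S = d + 2 \<and>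
      (\<forall>l\<in>{1..n}. xi l \<omega> \<in> (if l \<in> S then {\<theta><..} else {0<..\<theta>})))}
    = (\<Prod>i\<in>{}. prob {\<omega> \<in> space M. xi i \<omega> \<in> UNIV})
      * (real (card {1..n} choose (d + 2)) * (1 / real n) ^ (d + 2) * (1 - 1 / real n) ^ (card {1..n} - (d + 2)))"
    by (rule prob_binomial_pattern[OF indep]) (use \<theta> in \<open>auto simp: prob_fitness_gt prob_fitness_in_Ioc\<close>)
  then have "real (n choose (d + 2)) * (1 / real n) ^ (d + 2) * (1 - 1 / real n) ^ (n - (d + 2)) = prob E"
    by (simp add: E_def)
  also have "\<dots> \<le> prob {\<omega> \<in> space M. degree_fraction (\<lambda>i. xi i \<omega>) \<theta> n d = 0}"
  proof (rule finite_measure_mono)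
    show "E \<subseteq> {\<omega> \<in> space M. degree_fraction (\<lambda>i. xi i \<omega>) \<theta> n d = 0}"
    proof
      fix \<omega> assume "\<omega> \<in> E"
      then obtain S where "\<omega> \<in> space M" and S: "S \<subseteq> {1..n}" "card S = d + 2"
          and pattern: "\<forall>l\<in>{1..n}. xi l \<omega> \<in> (if l \<in> S then {\<theta><..} else {0<..\<theta>})"
        unfolding E_def by blast
      have "0 \<le> xi l \<omega>" if "l \<in> {1..n}" for l
        using pattern[rule_format, OF that] \<theta>(1) by (cases "l \<in> S") auto
      moreover have "\<theta> < xi l \<omega>" if "l \<in> S" for l
        using pattern[rule_format, of l] that S(1) by auto
      ultimately have "degree_fraction (\<lambda>i. xi i \<omega>) \<theta> n d = 0"
        using S by (intro degree_fraction_eq_zero_if_many_above) auto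
      then show "\<omega> \<in> {\<omega> \<in> space M. degree_fraction (\<lambda>i. xi i \<omega>) \<theta> n d = 0}"
        using \<open>\<omega> \<in> space M\<close> by simp
    qed
    show "{\<omega> \<in> space M. degree_fraction (\<lambda>i. xi i \<omega>) \<theta> n d = 0} \<in> events"
      by (intro borel_measurable_eq degree_fraction_measurable borel_measurable_const)
  qed
  finally show ?thesis
    by (simp add: \<theta>_def)
qed

lemma prob_threshold_degree_eq_ge:
  assumes n: "3 \<le> n" and k: "k \<in> {1..n}"
  shows "(1 - exp (- 1)) * (real ((n - 1) choose d) * (1 / real n) ^ d * (1 - exp 1 / real n) ^ (n - 1 - d))
    \<le> prob {\<omega> \<in> space M. threshold_degree (\<lambda>i. xi i \<omega>) (ln (real n) / lam) n k = d}"
proof -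
  define \<theta> where "\<theta> = ln (real n) / lam"
  define a where "a = 1 / lam"
  have "1 \<le> ln (real n)"
    using n exp_le by (subst ln_ge_iff) auto
  then have "0 \<le> \<theta> - a"
    using lam_pos by (simp add: \<theta>_def a_def field_simps)
  moreover have "exp (- \<theta> * lam) = 1 / real n"
    using n lam_pos by (simp add: \<theta>_def exp_minus inverse_eq_divide)
  moreover have "- (\<theta> - a) * lam = 1 - ln (real n)"
    using lam_pos by (simp add: \<theta>_def a_def field_simps)
  then have "exp (- (\<theta> - a) * lam) = exp 1 / real n"
    using n by (simp add: exp_diff)
  ultimately have \<theta>: "0 \<le> \<theta> - a" "exp (- \<theta> * lam) = 1 / real n" "exp (- (\<theta> - a) * lam) = exp 1 / real n"
    by blast+
  have a: "0 \<le> a" "exp (- a * lam) = exp (- 1)"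
    using lam_pos by (auto simp: a_def)
  define L where "L = {1..n} - {k}"
  define E where "E = {\<omega> \<in> space M. 0 < xi k \<omega> \<and> xi k \<omega> \<le> a \<and> (\<exists>S\<subseteq>L. card S = d \<and>
    (\<forall>l\<in>L. xi l \<omega> \<in> (if l \<in> S then {\<theta><..} else {0<..\<theta> - a})))}"
  have "prob {\<omega> \<in> space M. (\<forall>i\<in>{k}. xi i \<omega> \<in> {0<..a}) \<and> (\<exists>S\<subseteq>L. card S = d \<and>
      (\<forall>l\<in>L. xi l \<omega> \<in> (if l \<in> S then {\<theta><..} else {0<..\<theta> - a})))}
    = (\<Prod>i\<in>{k}. prob {\<omega> \<in> space M. xi i \<omega> \<in> {0<..a}})
      * (real (card L choose d) * (1 / real n) ^ d * (1 - exp 1 / real n) ^ (card L - d))"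
    using k \<theta> a
    by (intro prob_binomial_pattern[OF indep]) (auto simp: L_def prob_fitness_gt prob_fitness_in_Ioc)
  then have "(1 - exp (- 1)) * (real ((n - 1) choose d) * (1 / real n) ^ d * (1 - exp 1 / real n) ^ (n - 1 - d))
      = prob E"
    using k a by (simp add: E_def L_def prob_fitness_in_Ioc)
  also have "prob E \<le> prob {\<omega> \<in> space M. threshold_degree (\<lambda>i. xi i \<omega>) \<theta> n k = d}"
  proof (rule finite_measure_mono)
    show "E \<subseteq> {\<omega> \<in> space M. threshold_degree (\<lambda>i. xi i \<omega>) \<theta> n k = d}"
    proof
      fix \<omega> assume "\<omega> \<in> E"
      then obtain S where "\<omega> \<in> space M" "0 < xi k \<omega>" "xi k \<omega> \<le> a" and S: "S \<subseteq> L" "card S = d"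
          and pattern: "\<forall>l\<in>L. xi l \<omega> \<in> (if l \<in> S then {\<theta><..} else {0<..\<theta> - a})"
        unfolding E_def by blast
      moreover have "\<forall>l\<in>S. \<theta> < xi l \<omega>"
        using pattern S(1) by (metis subsetD if_True greaterThan_iff)
      moreover have "\<forall>l\<in>L - S. xi l \<omega> \<le> \<theta> - a"
        using pattern by auto
      ultimately show "\<omega> \<in> {\<omega> \<in> space M. threshold_degree (\<lambda>i. xi i \<omega>) \<theta> n k = d}"
        using threshold_degree_eq_card[of "\<lambda>i. xi i \<omega>" k a S n \<theta>] by (auto simp: L_def)
    qed
    show "{\<omega> \<in> space M. threshold_degree (\<lambda>i. xi i \<omega>) \<theta> n k = d} \<in> events"
      using k fitness_measurable by (intro threshold_degree_event_measurable) auto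
  qed
  finally show ?thesis
    by (simp add: \<theta>_def)
qed

lemma eventually_prob_degree_fraction_zero_ge:
  "\<exists>\<delta>>0. \<forall>\<^sub>F n in sequentially.
     \<delta> \<le> prob {\<omega> \<in> space M. degree_fraction (\<lambda>i. xi i \<omega>) (ln (real n) / lam) n d = 0}"
proof -
  obtain \<delta> :: real where "0 < \<delta>" and \<delta>: "\<forall>\<^sub>F n in sequentially.
      \<delta> \<le> real (n choose (d + 2)) * (1 / real n) ^ (d + 2) * (1 - 1 / real n) ^ (n - (d + 2))"
    using binomial_prob_eventually_ge[of 1 0 "d + 2"] unfolding diff_zero by auto
  from \<delta> eventually_ge_at_top[of "1::nat"]
  have "\<forall>\<^sub>F n in sequentially. \<delta> \<le> prob {\<omega> \<in> space M. degree_fraction (\<lambda>i. xi i \<omega>) (ln (real n) / lam) n d = 0}"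
  proof eventually_elim
    case (elim n)
    then show ?case
      using order_trans[OF elim(1) prob_degree_fraction_zero_ge[OF elim(2), of d]] by simp
  qed
  with \<open>0 < \<delta>\<close> show ?thesis
    by blast
qed

lemma eventually_expectation_degree_fraction_ge:
  "\<exists>\<delta>>0. \<forall>\<^sub>F n in sequentially. \<delta> \<le> expectation (\<lambda>\<omega>. degree_fraction (\<lambda>i. xi i \<omega>) (ln (real n) / lam) n d)"
proof -
  obtain \<delta> :: real where "0 < \<delta>" and \<delta>: "\<forall>\<^sub>F n in sequentially.
      \<delta> \<le> real ((n - 1) choose d) * (1 / real n) ^ d * (1 - exp 1 / real n) ^ (n - 1 - d)"
    using binomial_prob_eventually_ge[of "exp 1" 1 d] by auto
  define \<delta>' where "\<delta>' = (1 - exp (- 1)) * \<delta>"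
  have "0 < \<delta>'"
    using \<open>0 < \<delta>\<close> by (simp add: \<delta>'_def)
  from \<delta> eventually_ge_at_top[of "3::nat"]
  have "\<forall>\<^sub>F n in sequentially. \<delta>' \<le> expectation (\<lambda>\<omega>. degree_fraction (\<lambda>i. xi i \<omega>) (ln (real n) / lam) n d)"
  proof eventually_elim
    case (elim n)
    have "\<delta>' \<le> prob {\<omega> \<in> space M. threshold_degree (\<lambda>i. xi i \<omega>) (ln (real n) / lam) n k = d}"
      if "k \<in> {1..n}" for k
    proof -
      have "\<delta>' \<le> (1 - exp (- 1)) * (real ((n - 1) choose d) * (1 / real n) ^ d * (1 - exp 1 / real n) ^ (n - 1 - d))"
        unfolding \<delta>'_def using elim(1) by (intro mult_left_mono) auto
      then show ?thesis
        using prob_threshold_degree_eq_ge[OF elim(2) that, of d] by linarith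
    qed
    then have "(1 / real n) * (\<Sum>k\<in>{1..n}. \<delta>')
        \<le> (1 / real n) * (\<Sum>k\<in>{1..n}. prob {\<omega> \<in> space M. threshold_degree (\<lambda>i. xi i \<omega>) (ln (real n) / lam) n k = d})"
      by (intro mult_left_mono sum_mono) auto
    then show ?case
      using elim(2) by (simp add: expectation_degree_fraction)
  qed
  with \<open>0 < \<delta>'\<close> show ?thesis
    by blast
qed

end

theorem proposition7:
  fixes M :: "'a measure" and xi :: "nat \<Rightarrow> 'a \<Rightarrow> real" and lam :: real and d :: nat
  assumes "prob_space M"
    and "lam > 0"
    and "prob_space.indep_vars M (\<lambda>_. borel) xi {1..}"
    and "\<And>i. i \<ge> 1 \<Longrightarrow> distributed M lborel (xi i) (exponential_density lam)"
  shows "\<not> (\<exists>c. conv_in_prob_const M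
             (\<lambda>n \<omega>. (1 / real n) * real (card {k \<in> {1..n}.
                 threshold_degree (\<lambda>i. xi i \<omega>) (ln (real n) / lam) n k = d})) c)"
proof
  interpret exponential_fitnesses M xi lam
    using assms by (simp add: exponential_fitnesses_def exponential_fitnesses_axioms_def)
  let ?X = "\<lambda>n \<omega>. degree_fraction (\<lambda>i. xi i \<omega>) (ln (real n) / lam) n d"
  assume "\<exists>c. conv_in_prob_const M
             (\<lambda>n \<omega>. (1 / real n) * real (card {k \<in> {1..n}.
                 threshold_degree (\<lambda>i. xi i \<omega>) (ln (real n) / lam) n k = d})) c"
  then obtain c where conv: "conv_in_prob_const M ?X c"
    by (auto simp: degree_fraction_def)
  obtain \<delta>\<^sub>0 :: real where "0 < \<delta>\<^sub>0" "\<forall>\<^sub>F n in sequentially. \<delta>\<^sub>0 \<le> prob {\<omega> \<in> space M. ?X n \<omega> = 0}"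
    using eventually_prob_degree_fraction_zero_ge by blast
  then have "c = 0"
    by (intro conv_in_prob_const_eq_zero[OF conv degree_fraction_measurable])
  then have "(\<lambda>n. expectation (?X n)) \<longlonglongrightarrow> 0"
    using conv by (intro expectation_tendsto_zero_if_conv_in_prob_zero degree_fraction_measurable
        degree_fraction_nonneg degree_fraction_le_one) simp
  moreover obtain \<delta> :: real where "0 < \<delta>" "\<forall>\<^sub>F n in sequentially. \<delta> \<le> expectation (?X n)"
    using eventually_expectation_degree_fraction_ge by blast
  ultimately have "\<delta> \<le> 0"
    by (intro tendsto_lowerbound[where F=sequentially]) auto
  with \<open>0 < \<delta>\<close> show False
    by simp
qed

end
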